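(* Let $L$ be a positive integer and let $a,b,s$ be integers with $a\mid L$, $b\mid L$, $0\le s<b$, $s\in\frac{ab}{\gcd(ab,L)}\mathbb{Z}$, and let $\Lambda=\begin{pmatrix} a&0\\ s&b\end{pmatrix}\mathbb{Z}_L^2$. Let $\lambda_2=b/\gcd(b,s)$ and let $\tilde\Lambda$ be the subgroup of $\mathbb{Z}_L^2$ generated by $(\lambda_2a,0)^T$ and $(0,b)^T$. Then $$\Lambda=\bigcup_{m=0}^{\lambda_2-1}\Big((am,\ sm \bmod b)^T+\tilde\Lambda\Big).$$
   Context: $\mathbb{Z}_L=\mathbb{Z}/L\mathbb{Z}$; for an integer matrix $A$, $A\mathbb{Z}_L^2=\{Az\bmod L: z\in\mathbb{Z}_L^2\}$. $\gcd(b,0)=b$. *)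

theory Defs
  imports Main
begin

text \<open>Elements of Z_L^2 are represented by pairs of integers reduced mod L,
  i.e. by their canonical representatives in {0..L-1}^2.\<close>

definition red2 :: "int \<Rightarrow> int \<times> int \<Rightarrow> int \<times> int" where
  "red2 L v = (fst v mod L, snd v mod L)"

definition lat_img :: "int \<Rightarrow> int \<Rightarrow> int \<Rightarrow> int \<Rightarrow> (int \<times> int) set" where
  "lat_img L a s b =
     {red2 L (a * z1, s * z1 + b * z2) | z1 z2. z1 \<in> {0..<L} \<and> z2 \<in> {0..<L}}"

definition subgrp2 :: "int \<Rightarrow> int \<times> int \<Rightarrow> int \<times> int \<Rightarrow> (int \<times> int) set" where
  "subgrp2 L v w =
     {red2 L (k1 * fst v + k2 * fst w, k1 * snd v + k2 * snd w) | k1 k2. True}"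

definition coset2 :: "int \<Rightarrow> int \<times> int \<Rightarrow> (int \<times> int) set \<Rightarrow> (int \<times> int) set" where
  "coset2 L u H = {red2 L (fst u + fst h, snd u + snd h) | h. h \<in> H}"

end

theory Submission
  imports Defs
begin

text \<open>Writing \<open>z\<^sub>1 = q \<lambda>\<^sub>2 + m\<close> with \<open>0 \<le> m < \<lambda>\<^sub>2\<close>, the column combination
  \<open>z\<^sub>1 (a, s) + z\<^sub>2 (0, b)\<close> becomes \<open>(a m, s m mod b) + q (\<lambda>\<^sub>2 a, 0) + k (0, b)\<close>
  for a suitable integer \<open>k\<close>, because \<open>\<lambda>\<^sub>2 s\<close> is a multiple of \<open>b\<close>; conversely every such
  expression is a column combination. The statement is therefore an identity between
  subsets of \<open>\<int>\<^sup>2\<close>, pushed down to \<open>\<int>\<^sub>L\<^sup>2\<close> by reduction mod \<open>L\<close>.\<close>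

lemma lat_img_eq_image:
  assumes "L > 0"
  shows "lat_img L a s b = red2 L ` {(a * z1, s * z1 + b * z2) | z1 z2. True}"
proof (intro set_eqI iffI)
  fix x assume "x \<in> lat_img L a s b"
  then show "x \<in> red2 L ` {(a * z1, s * z1 + b * z2) | z1 z2. True}"
    unfolding lat_img_def by blast
next
  fix x assume "x \<in> red2 L ` {(a * z1, s * z1 + b * z2) | z1 z2. True}"
  then obtain z1 z2 where x: "x = red2 L (a * z1, s * z1 + b * z2)" by blast
  have "x = red2 L (a * (z1 mod L), s * (z1 mod L) + b * (z2 mod L))"
    unfolding x red2_def by (simp add: mod_mult_right_eq, metis mod_add_eq mod_mult_right_eq)
  moreover have "z1 mod L \<in> {0..<L}" "z2 mod L \<in> {0..<L}" using assms by auto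
  ultimately show "x \<in> lat_img L a s b" unfolding lat_img_def by blast
qed

lemma coset2_subgrp2_eq_image:
  "coset2 L u (subgrp2 L v w) =
   red2 L ` {(fst u + (k1 * fst v + k2 * fst w), snd u + (k1 * snd v + k2 * snd w)) | k1 k2. True}"
proof -
  have reduce_inner: "red2 L (fst u + fst (red2 L h), snd u + snd (red2 L h)) =
      red2 L (fst u + fst h, snd u + snd h)" for h
    by (simp add: red2_def mod_add_right_eq)
  show ?thesis
  proof (intro set_eqI iffI)
    fix x assume "x \<in> coset2 L u (subgrp2 L v w)"
    then obtain k1 k2 where "x = red2 L (fst u + fst (red2 L (k1 * fst v + k2 * fst w, k1 * snd v + k2 * snd w)),
        snd u + snd (red2 L (k1 * fst v + k2 * fst w, k1 * snd v + k2 * snd w)))"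
      unfolding coset2_def subgrp2_def by blast
    then show "x \<in> red2 L ` {(fst u + (k1 * fst v + k2 * fst w), snd u + (k1 * snd v + k2 * snd w)) | k1 k2. True}"
      unfolding reduce_inner by auto
  next
    fix x assume "x \<in> red2 L ` {(fst u + (k1 * fst v + k2 * fst w), snd u + (k1 * snd v + k2 * snd w)) | k1 k2. True}"
    then obtain k1 k2 where "x = red2 L (fst u + fst (red2 L (k1 * fst v + k2 * fst w, k1 * snd v + k2 * snd w)),
        snd u + snd (red2 L (k1 * fst v + k2 * fst w, k1 * snd v + k2 * snd w)))"
      unfolding reduce_inner by auto
    then show "x \<in> coset2 L u (subgrp2 L v w)"
      unfolding coset2_def subgrp2_def by blast
  qed
qed

lemma column_combinations_split_residues:
  fixes a s b l :: int
  assumes "l > 0" and "b dvd l * s"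
  shows "{(a * z1, s * z1 + b * z2) | z1 z2. True} =
    (\<Union>m\<in>{0..l - 1}. {(a * m + k1 * (l * a), s * m mod b + k2 * b) | k1 k2. True})"
proof -
  obtain t where ls: "l * s = b * t" using assms(2) by blast
  have shift: "s * (m + q * l) + b * z2 = s * m mod b + (z2 + s * m div b + q * t) * b"
    for m q z2 :: int
  proof -
    have "s * (m + q * l) = s * m mod b + b * (s * m div b) + q * (b * t)"
      using ls by (simp add: algebra_simps)
    then show ?thesis by (simp add: algebra_simps)
  qed
  show ?thesis
  proof (intro set_eqI iffI)
    fix x assume "x \<in> {(a * z1, s * z1 + b * z2) | z1 z2. True}"
    then obtain z1 z2 where x: "x = (a * z1, s * z1 + b * z2)" by blast
    define m where "m = z1 mod l"
    define q where "q = z1 div l"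
    have z1: "z1 = m + q * l" unfolding m_def q_def by simp
    have "m \<in> {0..l - 1}" unfolding m_def using assms(1) by auto
    moreover have "x = (a * m + q * (l * a), s * m mod b + (z2 + s * m div b + q * t) * b)"
      unfolding x z1 shift by (simp add: algebra_simps)
    ultimately show "x \<in> (\<Union>m\<in>{0..l - 1}. {(a * m + k1 * (l * a), s * m mod b + k2 * b) | k1 k2. True})"
      by blast
  next
    fix x assume "x \<in> (\<Union>m\<in>{0..l - 1}. {(a * m + k1 * (l * a), s * m mod b + k2 * b) | k1 k2. True})"
    then obtain m q k where x: "x = (a * m + q * (l * a), s * m mod b + k * b)" by blast
    have "x = (a * (m + q * l), s * (m + q * l) + b * (k - s * m div b - q * t))"
      unfolding x shift by (simp add: algebra_simps)
    then show "x \<in> {(a * z1, s * z1 + b * z2) | z1 z2. True}" by blast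
  qed
qed

lemma dvd_div_gcd_mult:
  fixes b s :: int
  shows "b dvd (b div gcd b s) * s"
proof -
  have "(b div gcd b s) * s = b * (s div gcd b s)"
    by (simp add: div_mult_swap dvd_div_mult)
  then show ?thesis by simp
qed

theorem proposition3p1:
  fixes L a b s :: int
  assumes "L > 0" and "a dvd L" and "b dvd L"
    and "0 \<le> s" and "s < b"
    and "(a * b div gcd (a * b) L) dvd s"
  shows "lat_img L a s b =
    (\<Union>m\<in>{0..b div gcd b s - 1}.
       coset2 L (a * m, s * m mod b)
         (subgrp2 L ((b div gcd b s) * a, 0) (0, b)))"
proof -
  define l where "l = b div gcd b s"
  have "b > 0" using assms(4,5) by simp
  then have "l > 0"
    unfolding l_def by (simp add: pos_imp_zdiv_pos_iff zdvd_imp_le)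
  have "lat_img L a s b = red2 L ` {(a * z1, s * z1 + b * z2) | z1 z2. True}"
    using assms(1) by (rule lat_img_eq_image)
  also have "\<dots> = (\<Union>m\<in>{0..l - 1}. red2 L ` {(a * m + k1 * (l * a), s * m mod b + k2 * b) | k1 k2. True})"
    unfolding column_combinations_split_residues[OF \<open>l > 0\<close> dvd_div_gcd_mult[of b s, folded l_def]]
    by (rule image_UN)
  also have "\<dots> = (\<Union>m\<in>{0..l - 1}. coset2 L (a * m, s * m mod b) (subgrp2 L (l * a, 0) (0, b)))"
    unfolding coset2_subgrp2_eq_image by simp
  finally show ?thesis unfolding l_def .
qed

end
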